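(* Let $f({\bm\alpha})=G_{\bf w}({\bm\mu}{\bm\alpha})$ on $\Delta_K$. The set $\Delta_K^*=\operatorname{argmin}_{{\bm\alpha}\in\Delta_K}f({\bm\alpha})$ is a convex polytope. Moreover, \[ g^*=\inf_{{\bm\alpha}\in\Delta_K\setminus\Delta_K^*}\ \max_{{\bm\alpha}^*\in\Delta_K^*}\frac{f({\bm\alpha})-f({\bm\alpha}^* )}{\|{\bm\alpha}-{\bm\alpha}^*\|} \] is positive.
   Context: ${\bm\mu}$ is a $D\times K$ real matrix with entries in $[0,1]$ (column $k$ is the mean cost vector of arm $k$). GGI: ${\bf w}\in[0,1]^D$ with $w_1>w_2>\dots>w_D$, $G_{\bf w}({\bf x})=\sum_{d=1}^Dw_dx_{\sigma(d)}$ with $\sigma$ a permutation sorting ${\bf x}$ in decreasing order. $\Delta_K=\{{\bm\alpha}\in\mathbb R^K:\sum_k\alpha_k=1,{\bm\alpha}\succeq0\}$; $\|\cdot\|$ is the Euclidean norm. *)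

theory Defs
  imports "HOL-Analysis.Analysis"
begin

text \<open>Objectives are indexed by 0..<D (paper: 1..D); arms by a finite type 'k.\<close>

definition ggi :: "nat \<Rightarrow> (nat \<Rightarrow> real) \<Rightarrow> (nat \<Rightarrow> real) \<Rightarrow> real" where
  "ggi D w x = (let xs = rev (sort (map x [0..<D])) in \<Sum>d<D. w d * xs ! d)"

definition matvec :: "(nat \<Rightarrow> 'k::finite \<Rightarrow> real) \<Rightarrow> real^'k \<Rightarrow> nat \<Rightarrow> real" where
  "matvec mu a = (\<lambda>d. \<Sum>k\<in>UNIV. mu d k * a $ k)"

definition prob_simplex :: "(real^'k::finite) set" where
  "prob_simplex = {a. (\<forall>k. 0 \<le> a $ k) \<and> (\<Sum>k\<in>UNIV. a $ k) = 1}"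

definition argmin_set :: "(real^'k::finite \<Rightarrow> real) \<Rightarrow> (real^'k) set" where
  "argmin_set f = {a \<in> prob_simplex. \<forall>b \<in> prob_simplex. f a \<le> f b}"

end

theory Submission
  imports Defs
begin

text \<open>For decreasing weights the GGI of a vector is the largest weighted sum over all
reorderings of its coordinates (an exchange argument), so f is the maximum of finitely many
linear functions \<open>c \<bullet> \<alpha>\<close>. Its set of minimisers on the simplex is the simplex cut by the
half-spaces \<open>c \<bullet> \<alpha> \<le> min f\<close>, a polytope. On each piece of the simplex where a fixed c attains
the maximum, f is linear, and a linear function on a polytope grows at least linearly in the
distance to a convex set containing its minimising face: this holds at the finitely many
vertices and passes to convex combinations. The smallest rate over the pieces is a \<open>\<kappa> > 0\<close>
with \<open>f \<alpha> - min f \<ge> \<kappa> \<cdot> dist(\<alpha>, \<Delta>\<^sup>*)\<close>, and \<open>\<kappa>\<close> is a lower bound for \<open>g\<^sup>*\<close>.\<close>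

lemma ggi_eq_permuted_sum:
  assumes \<sigma>: "\<sigma> permutes {..<D}"
    and sorted: "\<And>i. Suc i < D \<Longrightarrow> x (\<sigma> (Suc i)) \<le> x (\<sigma> i)"
  shows "ggi D w x = (\<Sum>d<D. w d * x (\<sigma> d))"
proof -
  define ys where "ys = map (x \<circ> \<sigma>) [0..<D]"
  have "mset ys = image_mset (x \<circ> \<sigma>) (mset_set {..<D})"
    by (simp add: ys_def lessThan_atLeast0)
  also have "\<dots> = image_mset x (mset_set {..<D})"
    using permutes_implies_image_mset_eq[OF \<sigma>, of "x \<circ> \<sigma>" x] by simp
  also have "\<dots> = mset (map x [0..<D])"
    by (simp add: lessThan_atLeast0)
  finally have "mset (rev ys) = mset (map x [0..<D])" by simp
  moreover have "sorted (rev ys)"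
    using sorted by (simp add: sorted_rev_iff_nth_Suc ys_def)
  ultimately have "sort (map x [0..<D]) = rev ys"
    by (rule properties_for_sort)
  then show ?thesis
    by (simp add: ggi_def ys_def)
qed

lemma sum_transpose_Suc:
  fixes h x :: "nat \<Rightarrow> real"
  assumes "Suc i < D"
  shows "(\<Sum>d<D. h d * x ((\<sigma> \<circ> Transposition.transpose i (Suc i)) d)) =
    (\<Sum>d<D. h d * x (\<sigma> d)) + (h i - h (Suc i)) * (x (\<sigma> (Suc i)) - x (\<sigma> i))"
proof -
  let ?g' = "\<lambda>d. h d * x ((\<sigma> \<circ> Transposition.transpose i (Suc i)) d)"
  let ?g = "\<lambda>d. h d * x (\<sigma> d)"
  have "(\<Sum>d<D. ?g' d - ?g d) = (\<Sum>d\<in>{i, Suc i}. ?g' d - ?g d)"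
    by (rule sum.mono_neutral_right) (use assms in \<open>auto simp: transpose_def\<close>)
  then show ?thesis
    by (simp add: sum_subtractf transpose_def algebra_simps)
qed

lemma ggi_eq_Max_permuted_sums:
  fixes w x :: "nat \<Rightarrow> real"
  assumes w_antimono: "\<And>i j. i < j \<Longrightarrow> j < D \<Longrightarrow> w j \<le> w i"
  shows "ggi D w x = Max ((\<lambda>\<sigma>. \<Sum>d<D. w d * x (\<sigma> d)) ` {\<sigma>. \<sigma> permutes {..<D}})"
proof -
  define P where "P = {\<sigma>. \<sigma> permutes {..<D}}"
  define V where "V \<sigma> = (\<Sum>d<D. w d * x (\<sigma> d))" for \<sigma>
  define M where "M \<sigma> = (\<Sum>d<D. real d * x (\<sigma> d))" for \<sigma>
  define Opt where "Opt = {\<sigma>\<in>P. V \<sigma> = Max (V ` P)}"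
  have "finite P" "P \<noteq> {}"
    unfolding P_def using finite_permutations[of "{..<D}"] permutes_id[of "{..<D}"] by blast+
  then have "Max (V ` P) \<in> V ` P"
    by simp
  then have "finite Opt" "Opt \<noteq> {}"
    using \<open>finite P\<close> unfolding Opt_def by auto
  \<comment> \<open>among the maximisers of V, one minimising M has no adjacent inversion\<close>
  then have "Min (M ` Opt) \<in> M ` Opt"
    by simp
  then obtain \<sigma> where "\<sigma> \<in> Opt" and "M \<sigma> = Min (M ` Opt)"
    by auto
  with \<open>finite Opt\<close> have \<sigma>_min: "M \<sigma> \<le> M \<tau>" if "\<tau> \<in> Opt" for \<tau>
    using that by simp
  from \<open>\<sigma> \<in> Opt\<close> have \<sigma>: "\<sigma> permutes {..<D}" "V \<sigma> = Max (V ` P)"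
    by (auto simp: Opt_def P_def)
  have "x (\<sigma> (Suc i)) \<le> x (\<sigma> i)" if i: "Suc i < D" for i
  proof (rule ccontr)
    assume "\<not> ?thesis"
    then have gap: "0 < x (\<sigma> (Suc i)) - x (\<sigma> i)" by simp
    define \<tau> where "\<tau> = \<sigma> \<circ> Transposition.transpose i (Suc i)"
    have "\<tau> \<in> P"
      using i \<sigma>(1) by (auto simp: P_def \<tau>_def intro!: permutes_compose permutes_swap_id)
    moreover have "V \<sigma> \<le> V \<tau>"
      using sum_transpose_Suc[OF i, of w x \<sigma>] w_antimono[of i "Suc i"] i gap
      by (simp add: V_def \<tau>_def)
    ultimately have "\<tau> \<in> Opt"
      using \<sigma>(2) \<open>finite P\<close> by (auto simp: Opt_def intro: antisym)
    moreover have "M \<tau> < M \<sigma>"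
      using sum_transpose_Suc[OF i, of real x \<sigma>] gap by (simp add: M_def \<tau>_def)
    ultimately show False
      using \<sigma>_min by fastforce
  qed
  then have "ggi D w x = V \<sigma>"
    using ggi_eq_permuted_sum[OF \<sigma>(1)] by (simp add: V_def)
  then show ?thesis
    using \<sigma>(2) by (simp add: V_def P_def)
qed

lemma convex_hull_affine_distance_bound:
  fixes V A :: "'a::real_inner set"
  assumes "finite V" "convex A" "0 \<le> c"
    and vertex_bound: "\<And>x. x \<in> V \<Longrightarrow> \<exists>y\<in>A. c * norm (x - y) \<le> v \<bullet> x - m"
    and a: "a \<in> convex hull V"
  shows "\<exists>z\<in>A. c * norm (a - z) \<le> v \<bullet> a - m"
proof -
  obtain y where y: "\<And>x. x \<in> V \<Longrightarrow> y x \<in> A \<and> c * norm (x - y x) \<le> v \<bullet> x - m"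
    using vertex_bound by metis
  obtain u where u: "\<And>x. x \<in> V \<Longrightarrow> 0 \<le> u x" "sum u V = 1" "(\<Sum>x\<in>V. u x *\<^sub>R x) = a"
    using a by (auto simp: convex_hull_finite[OF \<open>finite V\<close>])
  define z where "z = (\<Sum>x\<in>V. u x *\<^sub>R y x)"
  have "z \<in> A"
    unfolding z_def using assms(1,2) u y by (intro convex_sum) auto
  moreover have "c * norm (a - z) \<le> v \<bullet> a - m"
  proof -
    have "c * norm (a - z) = c * norm (\<Sum>x\<in>V. u x *\<^sub>R (x - y x))"
      by (simp add: z_def u(3)[symmetric] scaleR_diff_right sum_subtractf)
    also have "\<dots> \<le> c * (\<Sum>x\<in>V. u x * norm (x - y x))"
      using norm_sum[of "\<lambda>x. u x *\<^sub>R (x - y x)" V] u(1) \<open>0 \<le> c\<close>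
      by (intro mult_left_mono) auto
    also have "\<dots> \<le> (\<Sum>x\<in>V. u x * (v \<bullet> x - m))"
      unfolding sum_distrib_left using u(1) y
      by (intro sum_mono) (metis mult.left_commute mult_left_mono)
    also have "\<dots> = v \<bullet> a - m"
      by (simp add: u(3)[symmetric] u(2) inner_sum_right right_diff_distrib sum_subtractf
          sum_distrib_right[symmetric])
    finally show ?thesis .
  qed
  ultimately show ?thesis ..
qed

lemma polytope_linear_growth:
  fixes P A :: "'a::euclidean_space set"
  assumes "polytope P" "bounded A" "convex A" "A \<noteq> {}"
    and lower: "\<And>a. a \<in> P \<Longrightarrow> m \<le> v \<bullet> a"
    and face: "\<And>a. a \<in> P \<Longrightarrow> v \<bullet> a \<le> m \<Longrightarrow> a \<in> A"
  shows "\<exists>c>0. \<forall>a\<in>P. \<exists>z\<in>A. c * norm (a - z) \<le> v \<bullet> a - m"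
proof -
  obtain V where "finite V" and P: "P = convex hull V"
    using \<open>polytope P\<close> by (auto simp: polytope_def)
  have "bounded (P \<union> A)"
    using \<open>polytope P\<close> \<open>bounded A\<close> by (simp add: polytope_imp_bounded)
  then obtain B where "B > 0" and B: "\<And>x. x \<in> P \<union> A \<Longrightarrow> norm x \<le> B"
    by (auto simp: bounded_pos)
  have "V \<subseteq> P"
    unfolding P by (rule hull_subset)
  obtain z0 where "z0 \<in> A"
    using \<open>A \<noteq> {}\<close> by blast
  \<comment> \<open>vertices off the face are matched with z0, at distance at most 2B\<close>
  define c where "c = Min (insert 1 ((\<lambda>x. (v \<bullet> x - m) / (2 * B)) ` {x\<in>V. m < v \<bullet> x}))"
  have "c > 0"
    unfolding c_def using \<open>finite V\<close> \<open>B > 0\<close> by (subst Min_gr_iff) auto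
  have "\<exists>y\<in>A. c * norm (x - y) \<le> v \<bullet> x - m" if "x \<in> V" for x
  proof -
    have "x \<in> P"
      using that \<open>V \<subseteq> P\<close> by blast
    show ?thesis
    proof (cases "v \<bullet> x \<le> m")
      case True
      then show ?thesis
        using \<open>x \<in> P\<close> face lower by (intro bexI[of _ x]) auto
    next
      case False
      have "norm (x - z0) \<le> 2 * B"
        using B[of x] B[of z0] \<open>x \<in> P\<close> \<open>z0 \<in> A\<close> norm_triangle_ineq4[of x z0] by simp
      moreover have "c \<le> (v \<bullet> x - m) / (2 * B)"
        unfolding c_def using \<open>finite V\<close> that False by (intro Min_le) auto
      ultimately have "c * norm (x - z0) \<le> (v \<bullet> x - m) / (2 * B) * (2 * B)"
        using \<open>c > 0\<close> by (intro mult_mono) auto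
      then show ?thesis
        using \<open>z0 \<in> A\<close> \<open>B > 0\<close> by (intro bexI[of _ z0]) auto
    qed
  qed
  then have "\<forall>a\<in>P. \<exists>z\<in>A. c * norm (a - z) \<le> v \<bullet> a - m"
    unfolding P using convex_hull_affine_distance_bound[OF \<open>finite V\<close> \<open>convex A\<close>] \<open>c > 0\<close>
    by simp
  with \<open>c > 0\<close> show ?thesis
    by blast
qed

lemma continuous_on_Max:
  fixes g :: "'i \<Rightarrow> 'a::topological_space \<Rightarrow> real"
  assumes "finite I" "I \<noteq> {}" "\<And>i. i \<in> I \<Longrightarrow> continuous_on S (g i)"
  shows "continuous_on S (\<lambda>x. Max ((\<lambda>i. g i x) ` I))"
  using assms
proof (induction I rule: finite_ne_induct)
  case (singleton i)
  then show ?case by simp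
next
  case (insert i I)
  then have "continuous_on S (\<lambda>x. max (g i x) (Max ((\<lambda>i. g i x) ` I)))"
    by (intro continuous_on_max) auto
  then show ?case
    using insert by simp
qed

lemma polytope_sublevel_Max_inner:
  fixes S C :: "'a::euclidean_space set"
  assumes "polytope S" "finite C" "C \<noteq> {}"
  shows "polytope {a\<in>S. Max ((\<lambda>c. c \<bullet> a) ` C) \<le> m}"
proof -
  have "{a\<in>S. Max ((\<lambda>c. c \<bullet> a) ` C) \<le> m} = S \<inter> (\<Inter>c\<in>C. {a. c \<bullet> a \<le> m})"
    using assms(2,3) by auto
  moreover have "polyhedron (\<Inter>c\<in>C. {a. c \<bullet> a \<le> m})"
    using \<open>finite C\<close> by (auto intro: polyhedron_halfspace_le)
  ultimately show ?thesis
    using \<open>polytope S\<close> by (simp add: polytope_Int_polyhedron)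
qed

lemma Max_inner_linear_growth:
  fixes S C :: "'a::euclidean_space set"
  assumes "polytope S" "finite C" "C \<noteq> {}"
    and g: "\<And>a. g a = Max ((\<lambda>c. c \<bullet> a) ` C)"
    and lower: "\<And>a. a \<in> S \<Longrightarrow> m \<le> g a"
    and attained: "{a\<in>S. g a \<le> m} \<noteq> {}"
  shows "\<exists>\<kappa>>0. \<forall>a\<in>S. \<exists>z\<in>{a\<in>S. g a \<le> m}. \<kappa> * norm (a - z) \<le> g a - m"
proof -
  define A where "A = {a\<in>S. g a \<le> m}"
  have "polytope A"
    unfolding A_def g using polytope_sublevel_Max_inner assms(1-3) by blast
  define piece where "piece c = S \<inter> (\<Inter>c'\<in>C. {a. (c' - c) \<bullet> a \<le> 0})" for c
  have g_piece: "g a = c \<bullet> a" if "c \<in> C" "a \<in> piece c" for a c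
    using that \<open>finite C\<close> by (auto simp: g piece_def inner_diff_left intro!: Max_eqI)
  have "\<exists>\<kappa>>0. \<forall>a\<in>piece c. \<exists>z\<in>A. \<kappa> * norm (a - z) \<le> c \<bullet> a - m" if "c \<in> C" for c
  proof (rule polytope_linear_growth)
    show "polytope (piece c)"
      unfolding piece_def using \<open>polytope S\<close> \<open>finite C\<close>
      by (intro polytope_Int_polyhedron) (auto intro: polyhedron_halfspace_le)
    show "m \<le> c \<bullet> a" if "a \<in> piece c" for a
      using lower g_piece \<open>c \<in> C\<close> that by (force simp: piece_def)
    show "a \<in> A" if "a \<in> piece c" "c \<bullet> a \<le> m" for a
      using g_piece \<open>c \<in> C\<close> that by (auto simp: A_def piece_def)
  qed (use \<open>polytope A\<close> attained in \<open>auto simp: A_def polytope_imp_bounded polytope_imp_convex\<close>)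
  then obtain \<kappa> where \<kappa>: "\<And>c. c \<in> C \<Longrightarrow> \<kappa> c > 0 \<and>
      (\<forall>a\<in>piece c. \<exists>z\<in>A. \<kappa> c * norm (a - z) \<le> c \<bullet> a - m)"
    by metis
  have "\<exists>z\<in>A. Min (\<kappa> ` C) * norm (a - z) \<le> g a - m" if "a \<in> S" for a
  proof -
    have "g a \<in> (\<lambda>c. c \<bullet> a) ` C"
      unfolding g using \<open>finite C\<close> \<open>C \<noteq> {}\<close> by (intro Max_in) auto
    then obtain c where "c \<in> C" and "g a = c \<bullet> a"
      by auto
    moreover have "c' \<bullet> a \<le> g a" if "c' \<in> C" for c'
      unfolding g using \<open>finite C\<close> that by simp
    ultimately have "a \<in> piece c"
      using that by (auto simp: piece_def inner_diff_left)
    then obtain z where "z \<in> A" "\<kappa> c * norm (a - z) \<le> g a - m"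
      using \<kappa>[OF \<open>c \<in> C\<close>] \<open>g a = c \<bullet> a\<close> by auto
    moreover have "Min (\<kappa> ` C) * norm (a - z) \<le> \<kappa> c * norm (a - z)"
      using \<open>finite C\<close> \<open>c \<in> C\<close> by (intro mult_right_mono) auto
    ultimately show ?thesis
      by force
  qed
  moreover have "Min (\<kappa> ` C) > 0"
    using \<kappa> \<open>finite C\<close> \<open>C \<noteq> {}\<close> by simp
  ultimately show ?thesis
    unfolding A_def by blast
qed

lemma le_SUP_slope:
  fixes f :: "'a::real_normed_vector \<Rightarrow> real"
  assumes "closed A" "0 \<le> \<kappa>" "a \<notin> A"
    and const: "\<And>a'. a' \<in> A \<Longrightarrow> f a' = m"
    and growth: "\<exists>z\<in>A. \<kappa> * norm (a - z) \<le> f a - m"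
  shows "\<kappa> \<le> (SUP a'\<in>A. (f a - f a') / norm (a - a'))"
proof -
  obtain z where "z \<in> A" and z: "\<kappa> * norm (a - z) \<le> f a - m"
    using growth by blast
  have "0 \<le> f a - m"
    using z \<open>0 \<le> \<kappa>\<close> by (meson mult_nonneg_nonneg norm_ge_zero order_trans)
  have "infdist a A > 0"
    using infdist_pos_not_in_closed[OF \<open>closed A\<close>] \<open>a \<notin> A\<close> \<open>z \<in> A\<close> by blast
  have "(f a - f a') / norm (a - a') \<le> (f a - m) / infdist a A" if "a' \<in> A" for a'
  proof -
    have "infdist a A \<le> norm (a - a')"
      using infdist_le[OF that, of a] by (simp add: dist_norm)
    then have "(f a - m) / norm (a - a') \<le> (f a - m) / infdist a A"
      using \<open>0 \<le> f a - m\<close> \<open>infdist a A > 0\<close> by (intro divide_left_mono mult_pos_pos) auto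
    then show ?thesis
      using const[OF that] by simp
  qed
  then have bdd: "bdd_above ((\<lambda>a'. (f a - f a') / norm (a - a')) ` A)"
    by (rule bdd_aboveI2)
  have "norm (a - z) > 0"
    using \<open>a \<notin> A\<close> \<open>z \<in> A\<close> by auto
  then have "\<kappa> \<le> (f a - f z) / norm (a - z)"
    using z const[OF \<open>z \<in> A\<close>] by (simp add: pos_le_divide_eq)
  with bdd \<open>z \<in> A\<close> show ?thesis
    by (rule cSUP_upper2)
qed

lemma prob_simplex_eq_Int_halfspaces:
  "(prob_simplex :: (real^'k::finite) set) =
     (\<Inter>k. {a. axis k 1 \<bullet> a \<ge> 0}) \<inter> {a. (\<chi> k. 1) \<bullet> a = 1}"
proof -
  have "axis k 1 \<bullet> a = a $ k" "(\<chi> k. 1) \<bullet> a = (\<Sum>k\<in>UNIV. a $ k)" for k and a :: "real^'k"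
    by (simp add: inner_axis', simp add: inner_vec_def)
  then show ?thesis
    by (auto simp: prob_simplex_def)
qed

lemma polytope_prob_simplex: "polytope (prob_simplex :: (real^'k::finite) set)"
proof -
  have "norm a \<le> 1" if "a \<in> prob_simplex" for a :: "real^'k"
  proof -
    have "norm a \<le> (\<Sum>k\<in>UNIV. \<bar>a $ k\<bar>)"
      by (rule norm_le_l1_cart)
    also have "\<dots> = 1"
      using that by (simp add: prob_simplex_def)
    finally show ?thesis .
  qed
  then have "bounded (prob_simplex :: (real^'k) set)"
    by (auto simp: bounded_iff)
  moreover have "polyhedron (prob_simplex :: (real^'k) set)"
    unfolding prob_simplex_eq_Int_halfspaces
    by (intro polyhedron_Int polyhedron_Inter polyhedron_hyperplane)
       (auto intro: polyhedron_halfspace_ge)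
  ultimately show ?thesis
    by (simp add: polytope_eq_bounded_polyhedron)
qed

lemma prob_simplex_nonempty: "(prob_simplex :: (real^'k::finite) set) \<noteq> {}"
proof -
  have "axis k 1 \<in> (prob_simplex :: (real^'k) set)" for k
    by (auto simp: prob_simplex_def axis_def)
  then show ?thesis
    by blast
qed

definition gini_vectors :: "nat \<Rightarrow> (nat \<Rightarrow> real) \<Rightarrow> (nat \<Rightarrow> 'k::finite \<Rightarrow> real) \<Rightarrow> (real^'k) set"
  where "gini_vectors D w mu = (\<lambda>\<sigma>. \<chi> k. \<Sum>d<D. w d * mu (\<sigma> d) k) ` {\<sigma>. \<sigma> permutes {..<D}}"

lemma finite_gini_vectors: "finite (gini_vectors D w mu)"
  by (simp add: gini_vectors_def finite_permutations)

lemma gini_vectors_nonempty: "gini_vectors D w mu \<noteq> {}"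
  unfolding gini_vectors_def using permutes_id[of "{..<D}"] by blast

lemma ggi_matvec_eq_Max_inner:
  assumes "\<And>i j. i < j \<Longrightarrow> j < D \<Longrightarrow> w j \<le> w i"
  shows "ggi D w (matvec mu a) = Max ((\<lambda>c. c \<bullet> a) ` gini_vectors D w mu)"
proof -
  have "(\<chi> k. \<Sum>d<D. w d * mu (\<sigma> d) k) \<bullet> a = (\<Sum>d<D. w d * matvec mu a (\<sigma> d))" for \<sigma>
    by (simp add: inner_vec_def matvec_def sum_distrib_left sum_distrib_right mult.assoc
        sum.swap[where A = UNIV])
  then show ?thesis
    by (simp add: ggi_eq_Max_permuted_sums[OF assms] gini_vectors_def image_image)
qed

theorem lemma3:
  fixes D :: nat and w :: "nat \<Rightarrow> real" and mu :: "nat \<Rightarrow> 'k::finite \<Rightarrow> real"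
    and f :: "real^'k \<Rightarrow> real"
  assumes mu_range: "\<And>d k. d < D \<Longrightarrow> 0 \<le> mu d k \<and> mu d k \<le> 1"
    and w_range: "\<And>d. d < D \<Longrightarrow> 0 \<le> w d \<and> w d \<le> 1"
    and w_decr: "\<And>i j. i < j \<Longrightarrow> j < D \<Longrightarrow> w j < w i"
    and f_def: "\<And>a. f a = ggi D w (matvec mu a)"
  shows "polytope (argmin_set f) \<and>
    (prob_simplex - argmin_set f \<noteq> {} \<longrightarrow>
      (INF a \<in> prob_simplex - argmin_set f.
         SUP a' \<in> argmin_set f. (f a - f a') / norm (a - a')) > 0)"
proof -
  let ?S = "prob_simplex :: (real^'k) set" and ?C = "gini_vectors D w mu"
  have f_Max: "f a = Max ((\<lambda>c. c \<bullet> a) ` ?C)" for a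
    using w_decr by (simp add: f_def ggi_matvec_eq_Max_inner less_imp_le)
  have "continuous_on ?S f"
    unfolding f_Max[abs_def]
    by (intro continuous_on_Max finite_gini_vectors gini_vectors_nonempty continuous_intros)
  then obtain a0 where "a0 \<in> ?S" and a0_min: "\<And>b. b \<in> ?S \<Longrightarrow> f a0 \<le> f b"
    using continuous_attains_inf[OF polytope_imp_compact[OF polytope_prob_simplex]
        prob_simplex_nonempty] by blast
  then have argmin: "argmin_set f = {a\<in>?S. f a \<le> f a0}"
    by (auto simp: argmin_set_def intro: order_trans)
  have "polytope (argmin_set f)"
    unfolding argmin f_Max
    by (intro polytope_sublevel_Max_inner polytope_prob_simplex finite_gini_vectors
        gini_vectors_nonempty)
  moreover obtain \<kappa> where "\<kappa> > 0"
    and growth: "\<And>a. a \<in> ?S \<Longrightarrow> \<exists>z\<in>argmin_set f. \<kappa> * norm (a - z) \<le> f a - f a0"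
    using Max_inner_linear_growth[OF polytope_prob_simplex finite_gini_vectors
        gini_vectors_nonempty f_Max a0_min] \<open>a0 \<in> ?S\<close>
    unfolding argmin by blast
  have "\<kappa> \<le> (INF a \<in> ?S - argmin_set f. SUP a' \<in> argmin_set f. (f a - f a') / norm (a - a'))"
    if "?S - argmin_set f \<noteq> {}"
  proof (rule cINF_greatest[OF that])
    show "\<kappa> \<le> (SUP a' \<in> argmin_set f. (f a - f a') / norm (a - a'))"
      if "a \<in> ?S - argmin_set f" for a
      using that growth \<open>\<kappa> > 0\<close> \<open>polytope (argmin_set f)\<close>
      by (intro le_SUP_slope[where m = "f a0"])
         (auto simp: argmin polytope_imp_closed intro: antisym a0_min)
  qed
  ultimately show ?thesis
    using \<open>\<kappa> > 0\<close> by fastforce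
qed

end
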